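(* Let $\Phi:I\to O$ be a quantum channel and let $(\mathcal{E},W)$ and $(\mathcal{E}',W')$ be two Stinespring modules related to $\Phi$. Then $$W^*\mathcal{L}(\mathcal{E})W=W'^*\mathcal{L}(\mathcal{E}')W'\subseteq\mathcal{L}(\mathcal{M}_\Phi).$$
   Context: All Hilbert spaces are finite dimensional; inner products are linear in the second variable. $H_{in}=\bigoplus_a H^a_{in}$, $H_{out}=\bigoplus_b H^b_{out}$, $I=\bigoplus_a B(H^a_{in})\subseteq B(H_{in})$, $O=\bigoplus_b B(H^b_{out})\subseteq B(H_{out})$. A quantum channel is a trace-preserving completely positive map $\Phi:I\to O$. $e^a_i$ is an orthonormal basis of $H^a_{in}$, $e^a_{ij}$ the matrix units. $O^{op}$ is the opposite algebra of $O$ (product $a*b=ba$). Hilbert $O^{op}$-modules are right modules with $O^{op}$-valued inner products; $\mathcal{L}(\mathcal{M},\mathcal{N})$ denotes adjointable module maps and $\mathcal{L}(\mathcal{M})=\mathcal{L}(\mathcal{M},\mathcal{M})$. $\mathcal{M}_\Phi=H_{in}\otimes O^{op}$ with $(\xi\otimes a)*x=\xi\otimes(a*x)$ and $\langle\xi\otimes a,\eta\otimes b\rangle_{O^{op}}=\langle\xi,\eta\rangle a^**b$. $C_\Phi\in\mathcal{L}(\mathcal{M}_\Phi)$ is the $O^{op}$-linear map with $C_\Phi(e^a_j\otimes1)=\sum_i e^a_i\otimes\Phi(e^a_{ji})$ (with $\Phi(e^a_{ji})$ viewed in $O^{op}$). A Stinespring module related to $\Phi$ is a pair $(\mathcal{E},W)$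 with $\mathcal{E}$ a Hilbert $O^{op}$-module and $W\in\mathcal{L}(\mathcal{M}_\Phi,\mathcal{E})$ with $W^*W=C_\Phi$. *)

theory Defs
  imports "Jordan_Normal_Form.Matrix"
begin

text \<open>A direct sum of Hilbert spaces with dimensions given by the list ds is
  modelled as C^(sum_list ds), with the standard basis; the global basis index
  k belongs to the block blk ds k.  The algebra of block-diagonal matrices
  bdalg ds is the direct sum of the B(H^a) acting on that space.\<close>

definition blk :: "nat list \<Rightarrow> nat \<Rightarrow> nat" where
  "blk ds k = (LEAST a. k < sum_list (take (Suc a) ds))"

definition bdalg :: "nat list \<Rightarrow> complex mat set" where
  "bdalg ds = {A \<in> carrier_mat (sum_list ds) (sum_list ds).
      \<forall>i < sum_list ds. \<forall>j < sum_list ds. blk ds i \<noteq> blk ds j \<longrightarrow> A $$ (i, j) = 0}"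

definition adjm :: "complex mat \<Rightarrow> complex mat" where
  "adjm A = mat (dim_col A) (dim_row A) (\<lambda>(i, j). cnj (A $$ (j, i)))"

definition psd :: "nat \<Rightarrow> complex mat \<Rightarrow> bool" where
  "psd n A \<longleftrightarrow> A \<in> carrier_mat n n \<and>
     (\<forall>v :: nat \<Rightarrow> complex. (\<Sum>i<n. \<Sum>j<n. cnj (v i) * A $$ (i, j) * v j) \<in> \<real> \<and>
        0 \<le> Re (\<Sum>i<n. \<Sum>j<n. cnj (v i) * A $$ (i, j) * v j))"

text \<open>Matrix unit e_{ij} (global indices) in B(C^n).\<close>
definition munit :: "nat \<Rightarrow> nat \<Rightarrow> nat \<Rightarrow> complex mat" where
  "munit n i j = mat n n (\<lambda>(r, c). if r = i \<and> c = j then 1 else 0)"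

definition blockmat :: "nat \<Rightarrow> nat \<Rightarrow> (nat \<Rightarrow> nat \<Rightarrow> complex mat) \<Rightarrow> complex mat" where
  "blockmat k n X = mat (k * n) (k * n) (\<lambda>(r, c). X (r div n) (c div n) $$ (r mod n, c mod n))"

definition mtrace :: "complex mat \<Rightarrow> complex" where
  "mtrace A = (\<Sum>i<dim_row A. A $$ (i, i))"

text \<open>Phi : I \<rightarrow> O, I = bdalg ns, O = bdalg ms: linear, completely positive
  (Phi \<otimes> id_k positive on M_k(I) for all k) and trace preserving.\<close>
definition quantum_channel ::
  "nat list \<Rightarrow> nat list \<Rightarrow> (complex mat \<Rightarrow> complex mat) \<Rightarrow> bool" where
  "quantum_channel ns ms Phi \<longleftrightarrow>
     (\<forall>A \<in> bdalg ns. Phi A \<in> bdalg ms) \<and>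
     (\<forall>A \<in> bdalg ns. \<forall>B \<in> bdalg ns. Phi (A + B) = Phi A + Phi B) \<and>
     (\<forall>A \<in> bdalg ns. \<forall>c. Phi (c \<cdot>\<^sub>m A) = c \<cdot>\<^sub>m Phi A) \<and>
     (\<forall>k X. (\<forall>p<k. \<forall>q<k. X p q \<in> bdalg ns) \<longrightarrow>
        psd (k * sum_list ns) (blockmat k (sum_list ns) X) \<longrightarrow>
        psd (k * sum_list ms) (blockmat k (sum_list ms) (\<lambda>p q. Phi (X p q)))) \<and>
     (\<forall>A \<in> bdalg ns. mtrace (Phi A) = mtrace A)"

text \<open>A Hilbert module over O^op (O = bdalg ms) on the carrier type 'e:
  additive group 'e, complex scalar multiplication smul, right action act of
  O^op (act x a = x * a, where a * b = b a (matrix product) in O^op), and an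
  O^op-valued inner product inn (values in O; the * of O^op is the matrix
  adjoint, and the positive cone of O^op is that of O).  Completeness is stated
  for the norm x \<mapsto> sqrt (tr <x,x>), which is equivalent to the C*-module
  norm x \<mapsto> ||<x,x>||^(1/2) since O is finite dimensional.\<close>
definition hilbert_opmod ::
  "nat list \<Rightarrow> (complex \<Rightarrow> 'e::ab_group_add \<Rightarrow> 'e) \<Rightarrow> ('e \<Rightarrow> complex mat \<Rightarrow> 'e)
     \<Rightarrow> ('e \<Rightarrow> 'e \<Rightarrow> complex mat) \<Rightarrow> bool" where
  "hilbert_opmod ms smul act inn \<longleftrightarrow>
     \<comment> \<open>complex vector space\<close>
     (\<forall>c x y. smul c (x + y) = smul c x + smul c y) \<and>
     (\<forall>c d x. smul (c + d) x = smul c x + smul d x) \<and>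
     (\<forall>c d x. smul c (smul d x) = smul (c * d) x) \<and>
     (\<forall>x. smul 1 x = x) \<and>
     \<comment> \<open>right O^op-module, compatible with scalars\<close>
     (\<forall>x y. \<forall>a \<in> bdalg ms. act (x + y) a = act x a + act y a) \<and>
     (\<forall>x. \<forall>a \<in> bdalg ms. \<forall>b \<in> bdalg ms. act x (a + b) = act x a + act x b) \<and>
     (\<forall>x. \<forall>a \<in> bdalg ms. \<forall>b \<in> bdalg ms. act (act x a) b = act x (b * a)) \<and>
     (\<forall>c x. \<forall>a \<in> bdalg ms. smul c (act x a) = act (smul c x) a \<and>
                             smul c (act x a) = act x (c \<cdot>\<^sub>m a)) \<and>
     \<comment> \<open>O^op-valued inner product\<close>
     (\<forall>x y. inn x y \<in> bdalg ms) \<and>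
     (\<forall>x y z. inn x (y + z) = inn x y + inn x z) \<and>
     (\<forall>c x y. inn x (smul c y) = c \<cdot>\<^sub>m inn x y) \<and>
     (\<forall>x y. \<forall>a \<in> bdalg ms. inn x (act y a) = a * inn x y) \<and>
     (\<forall>x y. inn y x = adjm (inn x y)) \<and>
     (\<forall>x. psd (sum_list ms) (inn x x)) \<and>
     (\<forall>x. inn x x = 0\<^sub>m (sum_list ms) (sum_list ms) \<longrightarrow> x = 0) \<and>
     \<comment> \<open>completeness\<close>
     (\<forall>s :: nat \<Rightarrow> 'e.
        (\<forall>\<epsilon>>0. \<exists>K. \<forall>p\<ge>K. \<forall>q\<ge>K. Re (mtrace (inn (s p - s q) (s p - s q))) < \<epsilon>) \<longrightarrow>
        (\<exists>x. \<forall>\<epsilon>>0. \<exists>K. \<forall>p\<ge>K. Re (mtrace (inn (s p - x) (s p - x))) < \<epsilon>))"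

definition adjointable :: "('e \<Rightarrow> 'e \<Rightarrow> complex mat) \<Rightarrow> ('e \<Rightarrow> 'e) set" where
  "adjointable inn = {T. \<exists>S. \<forall>x y. inn (T x) y = inn x (S y)}"

definition msum :: "nat \<Rightarrow> nat list \<Rightarrow> (nat \<Rightarrow> complex mat) \<Rightarrow> complex mat" where
  "msum n ks f = foldr (\<lambda>k acc. f k + acc) ks (0\<^sub>m n n)"

text \<open>Via the standard basis e_k of H_in = C^N (N = sum_list ns),
  H_in \<otimes> O^op is identified with N-tuples (x_k)_{k<N} of elements of O,
  sum_k e_k \<otimes> x_k \<mapsto> (x_k).\<close>
definition Mcar :: "nat list \<Rightarrow> nat list \<Rightarrow> (nat \<Rightarrow> complex mat) set" where
  "Mcar ns ms = {x. (\<forall>k < sum_list ns. x k \<in> bdalg ms) \<and>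
                   (\<forall>k \<ge> sum_list ns. x k = 0\<^sub>m (sum_list ms) (sum_list ms))}"

text \<open><xi \<otimes> a, eta \<otimes> b> = <xi,eta> a^* * b = <xi,eta> b a^* (O^op product).\<close>
definition Minn :: "nat list \<Rightarrow> nat list \<Rightarrow> (nat \<Rightarrow> complex mat) \<Rightarrow> (nat \<Rightarrow> complex mat) \<Rightarrow> complex mat" where
  "Minn ns ms x y = msum (sum_list ms) [0..<sum_list ns] (\<lambda>k. y k * adjm (x k))"

definition Ladj_M :: "nat list \<Rightarrow> nat list \<Rightarrow> ((nat \<Rightarrow> complex mat) \<Rightarrow> (nat \<Rightarrow> complex mat)) set" where
  "Ladj_M ns ms = {T \<in> extensional (Mcar ns ms). T ` Mcar ns ms \<subseteq> Mcar ns ms \<and>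
     (\<exists>S. S ` Mcar ns ms \<subseteq> Mcar ns ms \<and>
          (\<forall>x \<in> Mcar ns ms. \<forall>y \<in> Mcar ns ms. Minn ns ms (T x) y = Minn ns ms x (S y)))}"

definition Ladj_ME :: "nat list \<Rightarrow> nat list \<Rightarrow> ('e \<Rightarrow> 'e \<Rightarrow> complex mat)
     \<Rightarrow> ((nat \<Rightarrow> complex mat) \<Rightarrow> 'e) set" where
  "Ladj_ME ns ms inn = {W. \<exists>V. (\<forall>y. V y \<in> Mcar ns ms) \<and>
     (\<forall>x \<in> Mcar ns ms. \<forall>y. inn (W x) y = Minn ns ms x (V y))}"

definition adjME :: "nat list \<Rightarrow> nat list \<Rightarrow> ('e \<Rightarrow> 'e \<Rightarrow> complex mat)
     \<Rightarrow> ((nat \<Rightarrow> complex mat) \<Rightarrow> 'e) \<Rightarrow> 'e \<Rightarrow> (nat \<Rightarrow> complex mat)" where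
  "adjME ns ms inn W = (SOME V. (\<forall>y. V y \<in> Mcar ns ms) \<and>
     (\<forall>x \<in> Mcar ns ms. \<forall>y. inn (W x) y = Minn ns ms x (V y)))"

text \<open>C_Phi: the O^op-linear map with C_Phi(e^a_j \<otimes> 1) = sum_i e^a_i \<otimes> Phi(e^a_{ji}).
  On sum_k e_k \<otimes> x_k = sum_k (e_k \<otimes> 1) * x_k it gives
  sum_k sum_i e_i \<otimes> (Phi(e_{ki}) * x_k) where * is the O^op product, i.e. the
  i-th component is sum over k in the block of i of x_k Phi(e_{ki}).\<close>
definition C_Phi :: "nat list \<Rightarrow> nat list \<Rightarrow> (complex mat \<Rightarrow> complex mat)
     \<Rightarrow> (nat \<Rightarrow> complex mat) \<Rightarrow> (nat \<Rightarrow> complex mat)" where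
  "C_Phi ns ms Phi x = (\<lambda>i. if i < sum_list ns then
      msum (sum_list ms) (filter (\<lambda>k. blk ns k = blk ns i) [0..<sum_list ns])
          (\<lambda>k. x k * Phi (munit (sum_list ns) k i))
      else 0\<^sub>m (sum_list ms) (sum_list ms))"

definition stinespring_module :: "nat list \<Rightarrow> nat list \<Rightarrow> (complex mat \<Rightarrow> complex mat)
     \<Rightarrow> (complex \<Rightarrow> 'e::ab_group_add \<Rightarrow> 'e) \<Rightarrow> ('e \<Rightarrow> complex mat \<Rightarrow> 'e)
     \<Rightarrow> ('e \<Rightarrow> 'e \<Rightarrow> complex mat) \<Rightarrow> ((nat \<Rightarrow> complex mat) \<Rightarrow> 'e) \<Rightarrow> bool" where
  "stinespring_module ns ms Phi smul act inn W \<longleftrightarrow>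
     hilbert_opmod ms smul act inn \<and> W \<in> Ladj_ME ns ms inn \<and>
     (\<forall>x \<in> Mcar ns ms. adjME ns ms inn W (W x) = C_Phi ns ms Phi x)"

definition compress :: "nat list \<Rightarrow> nat list \<Rightarrow> ('e \<Rightarrow> 'e \<Rightarrow> complex mat)
     \<Rightarrow> ((nat \<Rightarrow> complex mat) \<Rightarrow> 'e) \<Rightarrow> ((nat \<Rightarrow> complex mat) \<Rightarrow> (nat \<Rightarrow> complex mat)) set" where
  "compress ns ms inn W =
     (\<lambda>T. restrict (\<lambda>x. adjME ns ms inn W (T (W x))) (Mcar ns ms)) ` adjointable inn"

end

theory Submission
  imports Defs "HOL-Library.Function_Algebras"
begin

text \<open>Since W^* W = C_Phi, the operator C_Phi on M_Phi is self-adjoint, so C_Phi^2 w = 0 forces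
  C_Phi w = 0. As M_Phi is finite dimensional, C_Phi satisfies a polynomial identity; solving it for
  the term of lowest degree and using this kernel property yields a polynomial q with
  C_Phi q(C_Phi) C_Phi = C_Phi. Then W q(C_Phi) C_Phi = W, so R = W q(C_Phi) W'^* : E' \<rightarrow> E is
  adjointable with R W' = W, and W^* T W = W'^* (R^* T R) W' for every T in L(E). This gives one
  inclusion, symmetry the other, and W^* T W is adjointable on M_Phi with adjoint W^* T^* W.\<close>

lemma sum_eq_zero_lowest_coefficient:
  fixes c e :: "nat \<Rightarrow> 'a::field"
  assumes "r \<le> L" "c r \<noteq> 0" "\<forall>j<r. c j = 0" "(\<Sum>j\<le>L. c j * e j) = 0"
  shows "e r = (\<Sum>j<L - r. - c (Suc (r + j)) / c r * e (Suc (r + j)))"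
proof -
  have split: "(\<Sum>j\<le>L. c j * e j) = c r * e r + (\<Sum>j<L - r. c (Suc (r + j)) * e (Suc (r + j)))"
    using assms(1)
  proof (induct L rule: dec_induct)
    case base
    show ?case using assms(3) by (simp add: lessThan_Suc_atMost[symmetric])
  next
    case (step L)
    then have "Suc L - r = Suc (L - r)" "Suc (r + (L - r)) = Suc L" by simp_all
    with step show ?case by (simp add: add.assoc)
  qed
  show ?thesis
    using assms(2,4) unfolding split
    by (simp add: sum_divide_distrib[symmetric] sum_negf eq_neg_iff_add_eq_0 field_simps)
qed

lemma msum_Nil [simp]: "msum n [] f = 0\<^sub>m n n"
  by (simp add: msum_def)

lemma msum_Cons [simp]: "msum n (k # ks) f = f k + msum n ks f"
  by (simp add: msum_def)

lemma msum_carrier: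
  "(\<And>k. k \<in> set ks \<Longrightarrow> f k \<in> carrier_mat n n) \<Longrightarrow> msum n ks f \<in> carrier_mat n n"
  by (induct ks) auto

lemma msum_index:
  assumes "\<And>k. k \<in> set ks \<Longrightarrow> f k \<in> carrier_mat n n" and "r < n" "c < n"
  shows "msum n ks f $$ (r, c) = (\<Sum>k\<leftarrow>ks. f k $$ (r, c))"
  using assms
proof (induct ks)
  case (Cons k ks)
  then have "msum n ks f \<in> carrier_mat n n" by (intro msum_carrier) auto
  with Cons show ?case by auto
qed simp

lemma adjm_carrier: "adjm A \<in> carrier_mat (dim_col A) (dim_row A)"
  by (simp add: adjm_def)

lemma adjm_index: "i < dim_col A \<Longrightarrow> j < dim_row A \<Longrightarrow> adjm A $$ (i, j) = cnj (A $$ (j, i))"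
  by (simp add: adjm_def)

lemma adjm_adjm: "A \<in> carrier_mat n k \<Longrightarrow> adjm (adjm A) = A"
  by (auto simp: adjm_def intro!: eq_matI)

lemma munit_bdalg:
  "k < sum_list ns \<Longrightarrow> i < sum_list ns \<Longrightarrow> blk ns k = blk ns i \<Longrightarrow> munit (sum_list ns) k i \<in> bdalg ns"
  unfolding bdalg_def munit_def by auto

definition coords :: "nat \<Rightarrow> nat \<Rightarrow> (nat \<times> nat) set" where
  "coords N m = {..<N} \<times> {..<m}"

lemma finite_coords [simp]: "finite (coords N m)"
  by (simp add: coords_def)

lemma mem_coords [simp]: "(k, s) \<in> coords N m \<longleftrightarrow> k < N \<and> s < m"
  by (simp add: coords_def)

lemma coordsD: "z \<in> coords N m \<Longrightarrow> fst z < N \<and> snd z < m"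
  by (auto simp: coords_def)

subsection \<open>The module M_Phi\<close>

lemma Mcar_carrier: "x \<in> Mcar ns ms \<Longrightarrow> k < sum_list ns \<Longrightarrow> x k \<in> carrier_mat (sum_list ms) (sum_list ms)"
  by (simp add: Mcar_def bdalg_def)

lemma Mcar_outside: "x \<in> Mcar ns ms \<Longrightarrow> \<not> k < sum_list ns \<Longrightarrow> x k = 0\<^sub>m (sum_list ms) (sum_list ms)"
  by (simp add: Mcar_def)

lemma zero_Mcar: "(\<lambda>k. 0\<^sub>m (sum_list ms) (sum_list ms)) \<in> Mcar ns ms"
  by (simp add: Mcar_def bdalg_def)

lemma diff_Mcar: "a \<in> Mcar ns ms \<Longrightarrow> b \<in> Mcar ns ms \<Longrightarrow> a - b \<in> Mcar ns ms"
  unfolding Mcar_def bdalg_def by (auto intro!: minus_carrier_mat)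

lemma Mcar_eqI:
  assumes "a \<in> Mcar ns ms" "b \<in> Mcar ns ms"
    and "\<And>i r c. i < sum_list ns \<Longrightarrow> r < sum_list ms \<Longrightarrow> c < sum_list ms \<Longrightarrow> a i $$ (r, c) = b i $$ (r, c)"
  shows "a = b"
proof
  fix i show "a i = b i"
  proof (cases "i < sum_list ns")
    case True
    then show ?thesis
      using Mcar_carrier[OF assms(1) True] Mcar_carrier[OF assms(2) True] assms(3)[OF True]
      by (intro eq_matI) auto
  qed (simp add: Mcar_outside[OF assms(1)] Mcar_outside[OF assms(2)])
qed

lemma diff_self_Mcar: "a \<in> Mcar ns ms \<Longrightarrow> a - a = (\<lambda>k. 0\<^sub>m (sum_list ms) (sum_list ms))"
  by (rule Mcar_eqI[OF diff_Mcar zero_Mcar]) (auto dest: Mcar_carrier)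

lemma Mcar_eq_if_diff_eq_zero:
  assumes a: "a \<in> Mcar ns ms" and b: "b \<in> Mcar ns ms"
    and zero: "a - b = (\<lambda>k. 0\<^sub>m (sum_list ms) (sum_list ms))"
  shows "a = b"
proof (rule Mcar_eqI[OF a b])
  fix i r c assume irc: "i < sum_list ns" "r < sum_list ms" "c < sum_list ms"
  then have "(a i - b i) $$ (r, c) = 0" using fun_cong[OF zero, of i] by simp
  then show "a i $$ (r, c) = b i $$ (r, c)"
    using Mcar_carrier[OF a irc(1)] Mcar_carrier[OF b irc(1)] irc by simp
qed

lemma Minn_carrier:
  "x \<in> Mcar ns ms \<Longrightarrow> y \<in> Mcar ns ms \<Longrightarrow> Minn ns ms x y \<in> carrier_mat (sum_list ms) (sum_list ms)"
proof -
  assume x: "x \<in> Mcar ns ms" and y: "y \<in> Mcar ns ms"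
  have "y k * adjm (x k) \<in> carrier_mat (sum_list ms) (sum_list ms)" if "k < sum_list ns" for k
    using Mcar_carrier[OF x that] Mcar_carrier[OF y that] adjm_carrier[of "x k"] by auto
  then show ?thesis unfolding Minn_def by (intro msum_carrier) auto
qed

lemma Minn_index:
  assumes x: "x \<in> Mcar ns ms" and y: "y \<in> Mcar ns ms"
    and rc: "r < sum_list ms" "c < sum_list ms"
  shows "Minn ns ms x y $$ (r, c) =
    (\<Sum>z\<in>coords (sum_list ns) (sum_list ms). y (fst z) $$ (r, snd z) * cnj (x (fst z) $$ (c, snd z)))"
proof -
  let ?m = "sum_list ms" and ?N = "sum_list ns"
  have "y k * adjm (x k) \<in> carrier_mat ?m ?m" if "k < ?N" for k
    using Mcar_carrier[OF x that] Mcar_carrier[OF y that] adjm_carrier[of "x k"] by auto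
  then have "Minn ns ms x y $$ (r, c) = (\<Sum>k<?N. (y k * adjm (x k)) $$ (r, c))"
    unfolding Minn_def using rc
    by (subst msum_index) (auto simp: sum_list_distinct_conv_sum_set atLeast0LessThan)
  also have "\<dots> = (\<Sum>k<?N. \<Sum>s<?m. y k $$ (r, s) * cnj (x k $$ (c, s)))"
  proof (rule sum.cong[OF refl])
    fix k assume "k \<in> {..<?N}"
    then show "(y k * adjm (x k)) $$ (r, c) = (\<Sum>s<?m. y k $$ (r, s) * cnj (x k $$ (c, s)))"
      using Mcar_carrier[OF x, of k] Mcar_carrier[OF y, of k] rc adjm_carrier[of "x k"]
      by (auto simp: scalar_prod_def adjm_index atLeast0LessThan intro!: sum.cong)
  qed
  also have "\<dots> = (\<Sum>z\<in>coords ?N ?m. y (fst z) $$ (r, snd z) * cnj (x (fst z) $$ (c, snd z)))"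
    unfolding coords_def sum.cartesian_product by (simp add: case_prod_beta)
  finally show ?thesis .
qed

lemma Minn_adjm:
  assumes x: "x \<in> Mcar ns ms" and y: "y \<in> Mcar ns ms"
  shows "adjm (Minn ns ms x y) = Minn ns ms y x"
proof (rule eq_matI)
  fix i j assume "i < dim_row (Minn ns ms y x)" "j < dim_col (Minn ns ms y x)"
  then have ij: "i < sum_list ms" "j < sum_list ms" using Minn_carrier[OF y x] by auto
  then show "adjm (Minn ns ms x y) $$ (i, j) = Minn ns ms y x $$ (i, j)"
    using Minn_carrier[OF x y] by (simp add: adjm_index Minn_index[OF x y] Minn_index[OF y x] mult.commute)
qed (use Minn_carrier[OF x y] Minn_carrier[OF y x] adjm_carrier[of "Minn ns ms x y"] in auto)

lemma Minn_zero_right: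
  assumes x: "x \<in> Mcar ns ms"
  shows "Minn ns ms x (\<lambda>k. 0\<^sub>m (sum_list ms) (sum_list ms)) = 0\<^sub>m (sum_list ms) (sum_list ms)"
  using Minn_carrier[OF x zero_Mcar]
  by (intro eq_matI) (auto simp: Minn_index[OF x zero_Mcar] dest: coordsD intro!: sum.neutral)

lemma Minn_diff_right:
  assumes x: "x \<in> Mcar ns ms" and a: "a \<in> Mcar ns ms" and b: "b \<in> Mcar ns ms"
  shows "Minn ns ms x (a - b) = Minn ns ms x a - Minn ns ms x b"
proof (rule eq_matI)
  fix r c assume "r < dim_row (Minn ns ms x a - Minn ns ms x b)" "c < dim_col (Minn ns ms x a - Minn ns ms x b)"
  then have rc: "r < sum_list ms" "c < sum_list ms" using Minn_carrier[OF x b] by auto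
  have "(a - b) (fst z) $$ (r, snd z) = a (fst z) $$ (r, snd z) - b (fst z) $$ (r, snd z)"
    if "z \<in> coords (sum_list ns) (sum_list ms)" for z
    using coordsD[OF that] rc Mcar_carrier[OF a, of "fst z"] Mcar_carrier[OF b, of "fst z"] by simp
  then show "Minn ns ms x (a - b) $$ (r, c) = (Minn ns ms x a - Minn ns ms x b) $$ (r, c)"
    using rc Minn_carrier[OF x a] Minn_carrier[OF x b]
    by (simp add: Minn_index[OF x diff_Mcar[OF a b] rc] Minn_index[OF x a rc] Minn_index[OF x b rc]
        left_diff_distrib sum_subtractf[symmetric] cong: sum.cong)
qed (use Minn_carrier[OF x a] Minn_carrier[OF x b] Minn_carrier[OF x diff_Mcar[OF a b]] in auto)

lemma Minn_self_eq_zero: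
  assumes x: "x \<in> Mcar ns ms" and zero: "Minn ns ms x x = 0\<^sub>m (sum_list ms) (sum_list ms)"
  shows "x = (\<lambda>k. 0\<^sub>m (sum_list ms) (sum_list ms))"
proof (rule Mcar_eqI[OF x zero_Mcar])
  let ?I = "coords (sum_list ns) (sum_list ms)"
  fix k r s assume k: "k < sum_list ns" and r: "r < sum_list ms" and s: "s < sum_list ms"
  have "(\<Sum>z\<in>?I. x (fst z) $$ (r, snd z) * cnj (x (fst z) $$ (r, snd z))) = 0"
    using Minn_index[OF x x r r] zero r by simp
  then have "complex_of_real (\<Sum>z\<in>?I. (cmod (x (fst z) $$ (r, snd z)))\<^sup>2) = 0"
    by (simp only: complex_norm_square of_real_sum)
  then have "\<forall>z\<in>?I. (cmod (x (fst z) $$ (r, snd z)))\<^sup>2 = 0"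
    by (subst (asm) of_real_eq_0_iff, subst (asm) sum_nonneg_eq_0_iff) auto
  then have "(cmod (x k $$ (r, s)))\<^sup>2 = 0"
    using k s by (metis fst_conv snd_conv mem_coords)
  then show "x k $$ (r, s) = (\<lambda>k. 0\<^sub>m (sum_list ms) (sum_list ms)) k $$ (r, s)"
    using r s by simp
qed

lemma Mcar_eq_if_Minn_eq:
  assumes a: "a \<in> Mcar ns ms" and b: "b \<in> Mcar ns ms"
    and eq: "\<And>z. z \<in> Mcar ns ms \<Longrightarrow> Minn ns ms z a = Minn ns ms z b"
  shows "a = b"
proof -
  have ab: "a - b \<in> Mcar ns ms" by (rule diff_Mcar[OF a b])
  have "Minn ns ms (a - b) (a - b) = 0\<^sub>m (sum_list ms) (sum_list ms)"
    using Minn_diff_right[OF ab a b] eq[OF ab] Minn_carrier[OF ab b] by simp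
  then have "a - b = (\<lambda>k. 0\<^sub>m (sum_list ms) (sum_list ms))" by (rule Minn_self_eq_zero[OF ab])
  then show ?thesis by (rule Mcar_eq_if_diff_eq_zero[OF a b])
qed

subsection \<open>Kernels on a finite index set\<close>

lemma sum_fun_apply: "(sum f A) x = (\<Sum>a\<in>A. f a x)"
  by (induct A rule: infinite_finite_induct) auto

lemma (in vector_space) family_dependent_in_finite_span:
  assumes B: "finite B" "card B \<le> n" and span: "\<And>j. j \<le> n \<Longrightarrow> f j \<in> span B"
  shows "\<exists>c. (\<exists>j\<le>n. c j \<noteq> 0) \<and> (\<Sum>j\<le>n. c j *s f j) = 0"
proof (cases "inj_on f {..n}")
  case True
  have "dependent (f ` {..n})"
  proof (rule ccontr)
    assume indep: "independent (f ` {..n})"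
    have "f ` {..n} \<subseteq> span B" using span by auto
    then have "card (f ` {..n}) \<le> card B"
      using independent_span_bound[OF B(1) indep] by simp
    then show False using card_image[OF True] B(2) by simp
  qed
  then obtain u where u: "\<exists>v\<in>f ` {..n}. u v \<noteq> 0" "(\<Sum>v\<in>f ` {..n}. u v *s v) = 0"
    using dependent_finite by blast
  show ?thesis
  proof (intro exI[of _ "\<lambda>j. u (f j)"] conjI)
    show "\<exists>j\<le>n. u (f j) \<noteq> 0" using u(1) by auto
    show "(\<Sum>j\<le>n. u (f j) *s f j) = 0" using u(2) by (simp add: sum.reindex[OF True])
  qed
next
  case False
  then obtain i j where ij: "i \<le> n" "j \<le> n" "i \<noteq> j" "f i = f j"
    unfolding inj_on_def by auto
  define c :: "nat \<Rightarrow> 'a" where "c t = (if t = i then 1 else if t = j then -1 else 0)" for t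
  show ?thesis
  proof (intro exI[of _ c] conjI)
    show "\<exists>t\<le>n. c t \<noteq> 0" using ij(1) by (auto simp: c_def)
    have "(\<Sum>t\<le>n. c t *s f t) = (\<Sum>t\<in>{i, j}. c t *s f t)"
      by (rule sum.mono_neutral_right) (use ij in \<open>auto simp: c_def\<close>)
    also have "\<dots> = 0" using ij by (simp add: c_def)
    finally show "(\<Sum>t\<le>n. c t *s f t) = 0" .
  qed
qed

type_synonym kernel = "nat \<times> nat \<Rightarrow> nat \<times> nat \<Rightarrow> complex"

lemma kernel_family_dependent:
  fixes f :: "nat \<Rightarrow> kernel"
  assumes I: "finite I"
  shows "\<exists>c L. (\<exists>j\<le>L. c j \<noteq> 0) \<and> (\<forall>a\<in>I. \<forall>b\<in>I. (\<Sum>j\<le>L. c j * f j a b) = 0)"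
proof -
  interpret V: vector_space "\<lambda>(c::complex) (g::(nat \<times> nat) \<times> (nat \<times> nat) \<Rightarrow> complex) z. c * g z"
    by unfold_locales (auto simp: fun_eq_iff algebra_simps)
  define restr :: "kernel \<Rightarrow> (nat \<times> nat) \<times> (nat \<times> nat) \<Rightarrow> complex" where
    "restr q z = (if z \<in> I \<times> I then q (fst z) (snd z) else 0)" for q z
  define delta :: "(nat \<times> nat) \<times> (nat \<times> nat) \<Rightarrow> (nat \<times> nat) \<times> (nat \<times> nat) \<Rightarrow> complex" where
    "delta z0 z = (if z = z0 then 1 else 0)" for z0 z
  define L where "L = card (I \<times> I)"
  have B: "finite (delta ` (I \<times> I))" "card (delta ` (I \<times> I)) \<le> L"
    using I card_image_le[of "I \<times> I" delta] by (simp_all add: L_def)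
  have span: "restr q \<in> V.span (delta ` (I \<times> I))" for q
  proof -
    have expand: "restr q z = (\<Sum>z0\<in>I \<times> I. restr q z0 * delta z0 z)" for z
    proof (cases "z \<in> I \<times> I")
      case True
      then show ?thesis
        using I by (simp add: delta_def if_distrib[of "\<lambda>x. _ * x"] cong: if_cong)
    next
      case False
      then show ?thesis by (auto simp: restr_def delta_def intro!: sum.neutral)
    qed
    have "restr q = (\<Sum>z0\<in>I \<times> I. (\<lambda>z. restr q z0 * delta z0 z))"
      by (rule ext) (unfold sum_fun_apply, rule expand)
    also have "\<dots> \<in> V.span (delta ` (I \<times> I))"
    proof (rule V.span_sum)
      fix z0 assume "z0 \<in> I \<times> I"
      then have "delta z0 \<in> V.span (delta ` (I \<times> I))" by (intro V.span_base) simp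
      from V.span_scale[OF this, of "restr q z0"]
      show "(\<lambda>z. restr q z0 * delta z0 z) \<in> V.span (delta ` (I \<times> I))" by simp
    qed
    finally show ?thesis .
  qed
  obtain c where c: "\<exists>j\<le>L. c j \<noteq> 0" "(\<Sum>j\<le>L. (\<lambda>z. c j * restr (f j) z)) = 0"
    using V.family_dependent_in_finite_span[OF B, of "\<lambda>j. restr (f j)"] span by auto
  have "(\<Sum>j\<le>L. c j * f j a b) = 0" if "a \<in> I" "b \<in> I" for a b
    using fun_cong[OF c(2), of "(a, b)"] that by (simp add: sum_fun_apply restr_def)
  with c(1) show ?thesis by blast
qed

definition kernel_mult :: "(nat \<times> nat) set \<Rightarrow> kernel \<Rightarrow> kernel \<Rightarrow> kernel" where
  "kernel_mult I p q = (\<lambda>a b. \<Sum>c\<in>I. p a c * q c b)"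

definition kernel_one :: kernel where
  "kernel_one = (\<lambda>a b. if a = b then 1 else 0)"

fun kernel_pow :: "(nat \<times> nat) set \<Rightarrow> kernel \<Rightarrow> nat \<Rightarrow> kernel" where
  "kernel_pow I p 0 = kernel_one"
| "kernel_pow I p (Suc j) = kernel_mult I (kernel_pow I p j) p"

definition kernel_act :: "nat \<Rightarrow> nat \<Rightarrow> kernel \<Rightarrow> (nat \<Rightarrow> complex mat) \<Rightarrow> nat \<Rightarrow> complex mat" where
  "kernel_act N m p x i = (if i < N
     then mat m m (\<lambda>(r, c). \<Sum>z\<in>coords N m. x (fst z) $$ (r, snd z) * p z (i, c))
     else 0\<^sub>m m m)"

lemma kernel_act_index:
  "i < N \<Longrightarrow> r < m \<Longrightarrow> c < m \<Longrightarrow>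
    kernel_act N m p x i $$ (r, c) = (\<Sum>z\<in>coords N m. x (fst z) $$ (r, snd z) * p z (i, c))"
  by (simp add: kernel_act_def)

lemma kernel_act_carrier: "kernel_act N m p x i \<in> carrier_mat m m"
  by (simp add: kernel_act_def)

lemma kernel_act_outside: "\<not> i < N \<Longrightarrow> kernel_act N m p x i = 0\<^sub>m m m"
  by (simp add: kernel_act_def)

lemma kernel_act_eqI:
  assumes "\<And>i r c. i < N \<Longrightarrow> r < m \<Longrightarrow> c < m \<Longrightarrow> kernel_act N m p x i $$ (r, c) = kernel_act N m q y i $$ (r, c)"
  shows "kernel_act N m p x = kernel_act N m q y"
proof
  fix i show "kernel_act N m p x i = kernel_act N m q y i"
  proof (cases "i < N")
    case True
    then show ?thesis
      using kernel_act_carrier[of N m p x i] kernel_act_carrier[of N m q y i]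
      by (intro eq_matI) (auto simp: assms)
  qed (simp add: kernel_act_outside)
qed

lemma kernel_act_mult:
  "kernel_act N m (kernel_mult (coords N m) p q) x = kernel_act N m q (kernel_act N m p x)"
proof (rule kernel_act_eqI)
  let ?I = "coords N m"
  fix i r c assume irc: "i < N" "r < m" "c < m"
  have "kernel_act N m q (kernel_act N m p x) i $$ (r, c) =
      (\<Sum>z\<in>?I. (\<Sum>w\<in>?I. x (fst w) $$ (r, snd w) * p w z) * q z (i, c))"
    unfolding kernel_act_index[OF irc]
    by (rule sum.cong[OF refl]) (use coordsD irc in \<open>simp add: kernel_act_index\<close>)
  also have "\<dots> = (\<Sum>z\<in>?I. \<Sum>w\<in>?I. x (fst w) $$ (r, snd w) * (p w z * q z (i, c)))"
    by (simp add: sum_distrib_right mult.assoc)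
  also have "\<dots> = (\<Sum>w\<in>?I. \<Sum>z\<in>?I. x (fst w) $$ (r, snd w) * (p w z * q z (i, c)))"
    by (rule sum.swap)
  also have "\<dots> = (\<Sum>w\<in>?I. x (fst w) $$ (r, snd w) * (\<Sum>z\<in>?I. p w z * q z (i, c)))"
    by (simp add: sum_distrib_left)
  also have "\<dots> = kernel_act N m (kernel_mult ?I p q) x i $$ (r, c)"
    unfolding kernel_act_index[OF irc] kernel_mult_def ..
  finally show "kernel_act N m (kernel_mult ?I p q) x i $$ (r, c) =
      kernel_act N m q (kernel_act N m p x) i $$ (r, c)" by simp
qed

lemma kernel_act_one:
  assumes "\<And>k. k < N \<Longrightarrow> x k \<in> carrier_mat m m" "\<And>k. \<not> k < N \<Longrightarrow> x k = 0\<^sub>m m m"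
  shows "kernel_act N m kernel_one x = x"
proof
  fix i show "kernel_act N m kernel_one x i = x i"
  proof (cases "i < N")
    case True
    show ?thesis
    proof (rule eq_matI)
      fix r c assume "r < dim_row (x i)" "c < dim_col (x i)"
      then have rc: "r < m" "c < m" using assms(1)[OF True] by auto
      have "(\<Sum>z\<in>coords N m. x (fst z) $$ (r, snd z) * kernel_one z (i, c)) =
            (\<Sum>z\<in>coords N m. if z = (i, c) then x i $$ (r, c) else 0)"
        by (rule sum.cong) (auto simp: kernel_one_def)
      then show "kernel_act N m kernel_one x i $$ (r, c) = x i $$ (r, c)"
        using True rc by (simp add: kernel_act_index)
    qed (use assms(1)[OF True] in \<open>simp_all add: kernel_act_def\<close>)
  qed (simp add: kernel_act_outside assms(2))
qed

lemma kernel_act_sum_index: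
  assumes "\<And>i r s. i < N \<Longrightarrow> r < m \<Longrightarrow> s < m \<Longrightarrow> y i $$ (r, s) = (\<Sum>j\<in>J. d j * Y j i $$ (r, s))"
    and irs: "i < N" "r < m" "s < m"
  shows "kernel_act N m p y i $$ (r, s) = (\<Sum>j\<in>J. d j * kernel_act N m p (Y j) i $$ (r, s))"
proof -
  have "kernel_act N m p y i $$ (r, s) =
      (\<Sum>z\<in>coords N m. (\<Sum>j\<in>J. d j * Y j (fst z) $$ (r, snd z)) * p z (i, s))"
    unfolding kernel_act_index[OF irs]
    by (rule sum.cong[OF refl]) (use coordsD assms in simp)
  also have "\<dots> = (\<Sum>z\<in>coords N m. \<Sum>j\<in>J. d j * (Y j (fst z) $$ (r, snd z) * p z (i, s)))"
    by (simp add: sum_distrib_right mult.assoc)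
  also have "\<dots> = (\<Sum>j\<in>J. \<Sum>z\<in>coords N m. d j * (Y j (fst z) $$ (r, snd z) * p z (i, s)))"
    by (rule sum.swap)
  also have "\<dots> = (\<Sum>j\<in>J. d j * (\<Sum>z\<in>coords N m. Y j (fst z) $$ (r, snd z) * p z (i, s)))"
    by (simp add: sum_distrib_left)
  also have "\<dots> = (\<Sum>j\<in>J. d j * kernel_act N m p (Y j) i $$ (r, s))"
    by (simp add: kernel_act_index[OF irs])
  finally show ?thesis .
qed

subsection \<open>The operator C_Phi\<close>

text \<open>On the r-th rows of the components of a tuple, C_Phi acts as right multiplication by
  the matrix C_kernel, whose rows and columns are indexed by coords N m.\<close>

definition C_kernel :: "nat list \<Rightarrow> nat list \<Rightarrow> (complex mat \<Rightarrow> complex mat) \<Rightarrow> kernel" where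
  "C_kernel ns ms Phi a b = (if blk ns (fst a) = blk ns (fst b)
     then Phi (munit (sum_list ns) (fst a) (fst b)) $$ (snd a, snd b) else 0)"

text \<open>C_poly ns ms Phi d J x is q(C_Phi) x for the polynomial q(t) = sum of d j * t^j over j in J.\<close>

definition C_poly :: "nat list \<Rightarrow> nat list \<Rightarrow> (complex mat \<Rightarrow> complex mat) \<Rightarrow> (nat \<Rightarrow> complex) \<Rightarrow> nat set
    \<Rightarrow> (nat \<Rightarrow> complex mat) \<Rightarrow> nat \<Rightarrow> complex mat" where
  "C_poly ns ms Phi d J x i = (if i < sum_list ns
     then mat (sum_list ms) (sum_list ms) (\<lambda>(r, s). \<Sum>j\<in>J. d j * (C_Phi ns ms Phi ^^ j) x i $$ (r, s))
     else 0\<^sub>m (sum_list ms) (sum_list ms))"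

lemma hilbert_opmod_inn:
  assumes "hilbert_opmod ms smul act inn"
  shows "inn x y \<in> bdalg ms" and "inn x (y + z) = inn x y + inn x z"
    and "inn y x = adjm (inn x y)" and "inn x x = 0\<^sub>m (sum_list ms) (sum_list ms) \<Longrightarrow> x = 0"
  using assms unfolding hilbert_opmod_def by meson+

locale stinespring_setting =
  fixes ns ms :: "nat list" and Phi :: "complex mat \<Rightarrow> complex mat"
    and smul :: "complex \<Rightarrow> 'e::ab_group_add \<Rightarrow> 'e" and act :: "'e \<Rightarrow> complex mat \<Rightarrow> 'e"
    and inn :: "'e \<Rightarrow> 'e \<Rightarrow> complex mat" and W :: "(nat \<Rightarrow> complex mat) \<Rightarrow> 'e"
  assumes channel: "quantum_channel ns ms Phi"
    and stinespring: "stinespring_module ns ms Phi smul act inn W"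
begin

abbreviation "N \<equiv> sum_list ns"
abbreviation "m \<equiv> sum_list ms"
abbreviation "C \<equiv> C_Phi ns ms Phi"
abbreviation "W_adj \<equiv> adjME ns ms inn W"
abbreviation "Q \<equiv> C_poly ns ms Phi"
abbreviation "zero_tuple \<equiv> (\<lambda>k::nat. 0\<^sub>m m m :: complex mat)"

lemma hilbert: "hilbert_opmod ms smul act inn"
  using stinespring by (simp add: stinespring_module_def)

lemma inn_carrier: "inn x y \<in> carrier_mat m m"
  using hilbert_opmod_inn(1)[OF hilbert] by (simp add: bdalg_def)

lemma dim_inn [simp]: "dim_row (inn x y) = m" "dim_col (inn x y) = m"
  using inn_carrier by auto

lemmas inn_add_right = hilbert_opmod_inn(2)[OF hilbert]
  and inn_swap = hilbert_opmod_inn(3)[OF hilbert]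
  and inn_self_eq_zero = hilbert_opmod_inn(4)[OF hilbert]

lemma inn_diff_right_index:
  assumes "r < m" "c < m"
  shows "inn x (y - z) $$ (r, c) = inn x y $$ (r, c) - inn x z $$ (r, c)"
  using inn_add_right[of x "y - z" z] assms carrier_matD[OF inn_carrier[of x z]] by simp

lemma inn_diff_left_index:
  assumes "r < m" "c < m"
  shows "inn (y - z) x $$ (r, c) = inn y x $$ (r, c) - inn z x $$ (r, c)"
  using inn_diff_right_index[OF assms(2,1), of x y z] assms
  by (simp add: inn_swap[of _ x] adjm_index)

lemma W_adj_Mcar: "W_adj y \<in> Mcar ns ms"
  and inn_W_left: "x \<in> Mcar ns ms \<Longrightarrow> inn (W x) y = Minn ns ms x (W_adj y)"
proof -
  have "\<exists>V. (\<forall>y. V y \<in> Mcar ns ms) \<and> (\<forall>x \<in> Mcar ns ms. \<forall>y. inn (W x) y = Minn ns ms x (V y))"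
    using stinespring by (simp add: stinespring_module_def Ladj_ME_def)
  from someI_ex[OF this, folded adjME_def]
  show "W_adj y \<in> Mcar ns ms" "x \<in> Mcar ns ms \<Longrightarrow> inn (W x) y = Minn ns ms x (W_adj y)"
    by blast+
qed

lemma C_eq_W_adj_W: "x \<in> Mcar ns ms \<Longrightarrow> C x = W_adj (W x)"
  using stinespring by (simp add: stinespring_module_def)

lemma C_Mcar: "x \<in> Mcar ns ms \<Longrightarrow> C x \<in> Mcar ns ms"
  by (simp add: C_eq_W_adj_W W_adj_Mcar)

lemma Minn_C_right: "a \<in> Mcar ns ms \<Longrightarrow> b \<in> Mcar ns ms \<Longrightarrow> Minn ns ms a (C b) = inn (W a) (W b)"
  by (simp add: C_eq_W_adj_W inn_W_left)

lemma C_self_adjoint: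
  assumes a: "a \<in> Mcar ns ms" and b: "b \<in> Mcar ns ms"
  shows "Minn ns ms (C a) b = Minn ns ms a (C b)"
proof -
  have "Minn ns ms (C a) b = adjm (Minn ns ms b (C a))"
    using Minn_adjm[OF b C_Mcar[OF a]] by simp
  also have "\<dots> = inn (W a) (W b)"
    using Minn_C_right[OF b a] inn_swap[of "W b" "W a"] adjm_adjm[OF inn_carrier] by simp
  finally show ?thesis using Minn_C_right[OF a b] by simp
qed

lemma C_C_eq_zero:
  assumes w: "w \<in> Mcar ns ms" and zero: "C (C w) = zero_tuple"
  shows "C w = zero_tuple"
proof -
  have "Minn ns ms (C w) (C w) = Minn ns ms w (C (C w))" using C_self_adjoint[OF w C_Mcar[OF w]] .
  also have "\<dots> = 0\<^sub>m m m" using zero Minn_zero_right[OF w] by simp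
  finally show ?thesis using Minn_self_eq_zero[OF C_Mcar[OF w]] by simp
qed

lemma Phi_munit_carrier:
  assumes "k < N" "i < N" "blk ns k = blk ns i"
  shows "Phi (munit N k i) \<in> carrier_mat m m"
proof -
  have "Phi (munit N k i) \<in> bdalg ms"
    using channel munit_bdalg[OF assms] unfolding quantum_channel_def by blast
  then show ?thesis by (simp add: bdalg_def)
qed

lemma C_eq_kernel_act:
  assumes x: "x \<in> Mcar ns ms"
  shows "C x = kernel_act N m (C_kernel ns ms Phi) x"
proof
  fix i
  show "C x i = kernel_act N m (C_kernel ns ms Phi) x i"
  proof (cases "i < N")
    case True
    let ?same = "\<lambda>k. blk ns k = blk ns i"
    let ?f = "\<lambda>k. x k * Phi (munit N k i)"
    have f: "?f k \<in> carrier_mat m m" if "k \<in> set (filter ?same [0..<N])" for k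
      using that Mcar_carrier[OF x] Phi_munit_carrier True by (auto intro!: mult_carrier_mat)
    have Ci: "C x i = msum m (filter ?same [0..<N]) ?f"
      using True by (simp add: C_Phi_def)
    show ?thesis
    proof (rule eq_matI)
      fix r c assume "r < dim_row (kernel_act N m (C_kernel ns ms Phi) x i)"
        "c < dim_col (kernel_act N m (C_kernel ns ms Phi) x i)"
      then have rc: "r < m" "c < m" using kernel_act_carrier[of N m "C_kernel ns ms Phi" x i] by auto
      have "C x i $$ (r, c) = (\<Sum>k\<in>{k\<in>{0..<N}. ?same k}. ?f k $$ (r, c))"
        using msum_index[where ks="filter ?same [0..<N]" and f="?f", OF f rc] Ci by (simp add: sum_list_distinct_conv_sum_set)
      also have "\<dots> = (\<Sum>k<N. if ?same k then ?f k $$ (r, c) else 0)"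
        unfolding atLeast0LessThan by (rule sum.inter_filter) simp
      also have "\<dots> = (\<Sum>k<N. \<Sum>s<m. x k $$ (r, s) * C_kernel ns ms Phi (k, s) (i, c))"
      proof (rule sum.cong[OF refl])
        fix k assume k: "k \<in> {..<N}"
        show "(if ?same k then ?f k $$ (r, c) else 0) = (\<Sum>s<m. x k $$ (r, s) * C_kernel ns ms Phi (k, s) (i, c))"
          using Mcar_carrier[OF x, of k] Phi_munit_carrier[of k i] k True rc
          by (auto simp: C_kernel_def scalar_prod_def atLeast0LessThan intro!: sum.cong)
      qed
      also have "\<dots> = kernel_act N m (C_kernel ns ms Phi) x i $$ (r, c)"
        unfolding kernel_act_index[OF True rc] coords_def sum.cartesian_product
        by (simp add: case_prod_beta)
      finally show "C x i $$ (r, c) = kernel_act N m (C_kernel ns ms Phi) x i $$ (r, c)" .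
    qed (use msum_carrier[where ks="filter ?same [0..<N]" and f="?f", OF f] Ci kernel_act_carrier[of N m "C_kernel ns ms Phi" x i] in auto)
  qed (simp add: C_Phi_def kernel_act_outside)
qed


lemma C_pow_Mcar: "x \<in> Mcar ns ms \<Longrightarrow> (C ^^ j) x \<in> Mcar ns ms"
  by (induct j) (auto intro: C_Mcar)

lemma C_pow_eq_kernel_act:
  "x \<in> Mcar ns ms \<Longrightarrow> (C ^^ j) x = kernel_act N m (kernel_pow (coords N m) (C_kernel ns ms Phi) j) x"
proof (induct j)
  case 0
  then show ?case using kernel_act_one[of N x m] Mcar_carrier Mcar_outside by simp
next
  case (Suc j)
  then show ?case
    using C_eq_kernel_act[OF C_pow_Mcar[OF Suc.prems, of j]] by (simp add: kernel_act_mult)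
qed

lemma C_pow_self_adjoint:
  "a \<in> Mcar ns ms \<Longrightarrow> b \<in> Mcar ns ms \<Longrightarrow> Minn ns ms ((C ^^ j) a) b = Minn ns ms a ((C ^^ j) b)"
proof (induct j arbitrary: b)
  case (Suc j)
  have "Minn ns ms ((C ^^ Suc j) a) b = Minn ns ms ((C ^^ j) a) (C b)"
    using C_self_adjoint[OF C_pow_Mcar[OF Suc.prems(1)] Suc.prems(2)] by simp
  also have "\<dots> = Minn ns ms a ((C ^^ j) (C b))"
    using Suc.hyps[OF Suc.prems(1) C_Mcar[OF Suc.prems(2)]] .
  also have "(C ^^ j) (C b) = (C ^^ Suc j) b"
    by (simp only: funpow_Suc_right comp_def)
  finally show ?case .
qed simp

lemma C_pow_diff:
  assumes a: "a \<in> Mcar ns ms" and b: "b \<in> Mcar ns ms"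
  shows "(C ^^ n) (a - b) = (C ^^ n) a - (C ^^ n) b"
proof (rule Mcar_eqI)
  let ?K = "kernel_pow (coords N m) (C_kernel ns ms Phi) n"
  show "(C ^^ n) (a - b) \<in> Mcar ns ms" by (rule C_pow_Mcar[OF diff_Mcar[OF a b]])
  show "(C ^^ n) a - (C ^^ n) b \<in> Mcar ns ms" by (rule diff_Mcar[OF C_pow_Mcar[OF a] C_pow_Mcar[OF b]])
  fix i r s assume irs: "i < N" "r < m" "s < m"
  let ?d = "\<lambda>j::nat. if j = 0 then 1 else - 1 :: complex"
  let ?Y = "\<lambda>j::nat. if j = 0 then a else b"
  have "(a - b) i' $$ (r', s') = (\<Sum>j\<in>{0, 1}. ?d j * ?Y j i' $$ (r', s'))"
    if "i' < N" "r' < m" "s' < m" for i' r' s'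
    using that Mcar_carrier[OF a, of i'] Mcar_carrier[OF b, of i'] by simp
  then have "kernel_act N m ?K (a - b) i $$ (r, s) = kernel_act N m ?K a i $$ (r, s) - kernel_act N m ?K b i $$ (r, s)"
    using kernel_act_sum_index[where y="a - b" and J="{0, 1}" and d="?d" and Y="?Y" and p="?K", OF _ irs]
    by simp
  then show "(C ^^ n) (a - b) i $$ (r, s) = ((C ^^ n) a - (C ^^ n) b) i $$ (r, s)"
    using irs kernel_act_carrier[of N m ?K a i] kernel_act_carrier[of N m ?K b i]
    by (simp add: C_pow_eq_kernel_act a b diff_Mcar)
qed

lemma C_pow_Suc_eq_zero:
  "w \<in> Mcar ns ms \<Longrightarrow> (C ^^ Suc n) w = zero_tuple \<Longrightarrow> C w = zero_tuple"
proof (induct n)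
  case (Suc n)
  then show ?case using C_C_eq_zero[OF C_pow_Mcar[OF Suc.prems(1), of n]] by simp
qed simp

lemma C_pow_annihilating:
  "\<exists>c L. (\<exists>j\<le>L. c j \<noteq> 0) \<and>
     (\<forall>x\<in>Mcar ns ms. \<forall>i<N. \<forall>r<m. \<forall>s<m. (\<Sum>j\<le>L. c j * (C ^^ j) x i $$ (r, s)) = 0)"
proof -
  let ?I = "coords N m" and ?K = "kernel_pow (coords N m) (C_kernel ns ms Phi)"
  obtain c L where c: "\<exists>j\<le>L. c j \<noteq> 0" and K: "\<forall>a\<in>?I. \<forall>b\<in>?I. (\<Sum>j\<le>L. c j * ?K j a b) = 0"
    using kernel_family_dependent[OF finite_coords] by blast
  have "(\<Sum>j\<le>L. c j * (C ^^ j) x i $$ (r, s)) = 0"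
    if x: "x \<in> Mcar ns ms" and irs: "i < N" "r < m" "s < m" for x i r s
  proof -
    have "(\<Sum>j\<le>L. c j * (C ^^ j) x i $$ (r, s)) =
        (\<Sum>j\<le>L. \<Sum>z\<in>?I. x (fst z) $$ (r, snd z) * (c j * ?K j z (i, s)))"
      by (simp add: C_pow_eq_kernel_act[OF x] kernel_act_index[OF irs] sum_distrib_left mult.left_commute)
    also have "\<dots> = (\<Sum>z\<in>?I. x (fst z) $$ (r, snd z) * (\<Sum>j\<le>L. c j * ?K j z (i, s)))"
      by (subst sum.swap) (simp add: sum_distrib_left)
    also have "\<dots> = 0"
      using K irs by (intro sum.neutral) simp
    finally show ?thesis .
  qed
  with c show ?thesis by blast
qed

lemma C_poly_index:
  "i < N \<Longrightarrow> r < m \<Longrightarrow> s < m \<Longrightarrow> Q d J x i $$ (r, s) = (\<Sum>j\<in>J. d j * (C ^^ j) x i $$ (r, s))"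
  by (simp add: C_poly_def)

lemma C_poly_Mcar:
  assumes x: "x \<in> Mcar ns ms"
  shows "Q d J x \<in> Mcar ns ms"
proof -
  have "(C ^^ j) x i $$ (r, s) = 0" if "i < N" "r < m" "s < m" "blk ms r \<noteq> blk ms s" for i r s j
    using C_pow_Mcar[OF x, of j] that unfolding Mcar_def bdalg_def by blast
  then show ?thesis
    by (auto simp: Mcar_def bdalg_def C_poly_index) (simp_all add: C_poly_def)
qed

lemma C_pow_C_poly_index:
  assumes x: "x \<in> Mcar ns ms" and irs: "i < N" "r < m" "s < m"
  shows "(C ^^ n) (Q d J x) i $$ (r, s) = (\<Sum>j\<in>J. d j * (C ^^ (n + j)) x i $$ (r, s))"
proof -
  let ?K = "kernel_pow (coords N m) (C_kernel ns ms Phi) n"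
  have "(C ^^ n) (Q d J x) i $$ (r, s) = (\<Sum>j\<in>J. d j * kernel_act N m ?K ((C ^^ j) x) i $$ (r, s))"
    unfolding C_pow_eq_kernel_act[OF C_poly_Mcar[OF x]]
    by (rule kernel_act_sum_index[OF C_poly_index irs])
  also have "\<dots> = (\<Sum>j\<in>J. d j * (C ^^ (n + j)) x i $$ (r, s))"
    by (simp add: C_pow_eq_kernel_act[OF C_pow_Mcar[OF x], symmetric] funpow_add)
  finally show ?thesis .
qed


lemma C_poly_adjoint:
  assumes a: "a \<in> Mcar ns ms" and b: "b \<in> Mcar ns ms"
  shows "Minn ns ms (Q d J a) b = Minn ns ms a (Q (\<lambda>j. cnj (d j)) J b)"
proof (rule eq_matI)
  let ?I = "coords N m" and ?d' = "\<lambda>j. cnj (d j)"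
  fix r c assume "r < dim_row (Minn ns ms a (Q ?d' J b))" "c < dim_col (Minn ns ms a (Q ?d' J b))"
  then have rc: "r < m" "c < m" using Minn_carrier[OF a C_poly_Mcar[OF b, of ?d' J]] by auto
  have "Minn ns ms (Q d J a) b $$ (r, c) =
      (\<Sum>z\<in>?I. \<Sum>j\<in>J. cnj (d j) * (b (fst z) $$ (r, snd z) * cnj ((C ^^ j) a (fst z) $$ (c, snd z))))"
    unfolding Minn_index[OF C_poly_Mcar[OF a] b rc]
    by (intro sum.cong refl) (use coordsD rc in \<open>simp add: C_poly_index cnj_sum sum_distrib_left mult.left_commute\<close>)
  also have "\<dots> = (\<Sum>j\<in>J. cnj (d j) * Minn ns ms ((C ^^ j) a) b $$ (r, c))"
    by (subst sum.swap) (simp add: Minn_index[OF C_pow_Mcar[OF a] b rc] sum_distrib_left)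
  also have "\<dots> = (\<Sum>j\<in>J. cnj (d j) * Minn ns ms a ((C ^^ j) b) $$ (r, c))"
    by (simp add: C_pow_self_adjoint[OF a b])
  also have "\<dots> = (\<Sum>j\<in>J. \<Sum>z\<in>?I. cnj (d j) * ((C ^^ j) b (fst z) $$ (r, snd z) * cnj (a (fst z) $$ (c, snd z))))"
    by (simp add: Minn_index[OF a C_pow_Mcar[OF b] rc] sum_distrib_left)
  also have "\<dots> = (\<Sum>z\<in>?I. (\<Sum>j\<in>J. cnj (d j) * (C ^^ j) b (fst z) $$ (r, snd z)) * cnj (a (fst z) $$ (c, snd z)))"
    by (subst sum.swap) (simp add: sum_distrib_right mult.assoc)
  also have "\<dots> = Minn ns ms a (Q ?d' J b) $$ (r, c)"
    unfolding Minn_index[OF a C_poly_Mcar[OF b] rc]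
    by (intro sum.cong refl) (use coordsD rc in \<open>simp add: C_poly_index\<close>)
  finally show "Minn ns ms (Q d J a) b $$ (r, c) = Minn ns ms a (Q ?d' J b) $$ (r, c)" .
qed (use Minn_carrier[OF C_poly_Mcar[OF a, of d J] b] Minn_carrier[OF a C_poly_Mcar[OF b, of "\<lambda>j. cnj (d j)" J]]
     in auto)

text \<open>If c is an annihilating polynomial of C with lowest nonzero coefficient c_r, then
  C^r = C^(r+1) q(C) for q(t) = - (c_(r+1) + c_(r+2) t + ...) / c_r.\<close>

lemma C_pow_recurrence:
  "\<exists>r d J. finite J \<and> (\<forall>x\<in>Mcar ns ms. (C ^^ Suc r) (Q d J x) = (C ^^ r) x)"
proof -
  obtain c L where "\<exists>j\<le>L. c j \<noteq> 0" and annih: "\<forall>x\<in>Mcar ns ms. \<forall>i<N. \<forall>r<m. \<forall>s<m.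
      (\<Sum>j\<le>L. c j * (C ^^ j) x i $$ (r, s)) = 0"
    using C_pow_annihilating by blast
  then obtain j0 where j0: "j0 \<le> L" "c j0 \<noteq> 0" by blast
  define r where "r = (LEAST j. c j \<noteq> 0)"
  have cr: "c r \<noteq> 0" and "r \<le> j0" and below: "\<forall>j<r. c j = 0"
    unfolding r_def using LeastI[of "\<lambda>j. c j \<noteq> 0", OF j0(2)] Least_le[of "\<lambda>j. c j \<noteq> 0", OF j0(2)]
      not_less_Least by blast+
  then have "r \<le> L" using j0(1) by simp
  define d where "d j = - c (Suc (r + j)) / c r" for j
  have "(C ^^ Suc r) (Q d {..<L - r} x) = (C ^^ r) x" if x: "x \<in> Mcar ns ms" for x
  proof (rule Mcar_eqI[OF C_pow_Mcar[OF C_poly_Mcar[OF x]] C_pow_Mcar[OF x]])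
    fix i a b assume iab: "i < N" "a < m" "b < m"
    have "(C ^^ r) x i $$ (a, b) = (\<Sum>j<L - r. d j * (C ^^ Suc (r + j)) x i $$ (a, b))"
      unfolding d_def
      by (rule sum_eq_zero_lowest_coefficient[OF \<open>r \<le> L\<close> cr below]) (use annih x iab in blast)
    then show "(C ^^ Suc r) (Q d {..<L - r} x) i $$ (a, b) = (C ^^ r) x i $$ (a, b)"
      by (simp only: C_pow_C_poly_index[OF x iab] add_Suc)
  qed
  then show ?thesis by blast
qed

lemma C_poly_pseudo_inverse: "\<exists>d J. finite J \<and> (\<forall>x\<in>Mcar ns ms. C (Q d J (C x)) = C x)"
proof -
  obtain r d J where "finite J" and rec: "\<forall>x\<in>Mcar ns ms. (C ^^ Suc r) (Q d J x) = (C ^^ r) x"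
    using C_pow_recurrence by blast
  have "C (Q d J (C x)) = C x" if x: "x \<in> Mcar ns ms" for x
  proof -
    have Cx: "C x \<in> Mcar ns ms" and QCx: "Q d J (C x) \<in> Mcar ns ms"
      using C_Mcar[OF x] C_poly_Mcar[OF C_Mcar[OF x]] by simp_all
    have "(C ^^ r) (C x) = (C ^^ Suc r) x" by (simp only: funpow_Suc_right comp_def)
    then have "(C ^^ Suc r) (x - Q d J (C x)) = (C ^^ Suc r) x - (C ^^ Suc r) x"
      using C_pow_diff[OF x QCx, of "Suc r"] rec Cx by simp
    also have "\<dots> = zero_tuple"
      by (rule diff_self_Mcar[OF C_pow_Mcar[OF x]])
    finally have "C x - C (Q d J (C x)) = zero_tuple"
      using C_pow_Suc_eq_zero[OF diff_Mcar[OF x QCx]] C_pow_diff[OF x QCx, of 1] by simp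
    then show ?thesis
      by (rule Mcar_eq_if_diff_eq_zero[OF C_Mcar[OF x] C_Mcar[OF QCx], symmetric])
  qed
  with \<open>finite J\<close> show ?thesis by blast
qed

text \<open>Expanding the inner product shows that W q(C) C z - W z has length zero.\<close>

lemma W_C_poly_C:
  assumes pinv: "\<forall>x\<in>Mcar ns ms. C (Q d J (C x)) = C x" and z: "z \<in> Mcar ns ms"
  shows "W (Q d J (C z)) = W z"
proof -
  let ?y = "Q d J (C z)"
  have y: "?y \<in> Mcar ns ms" using C_poly_Mcar[OF C_Mcar[OF z]] .
  have "inn (W ?y - W z) (W ?y - W z) = 0\<^sub>m m m"
  proof (rule eq_matI)
    fix r c assume "r < dim_row (0\<^sub>m m m :: complex mat)" "c < dim_col (0\<^sub>m m m :: complex mat)"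
    then have rc: "r < m" "c < m" by simp_all
    have "inn (W ?y) (W ?y) = inn (W ?y) (W z)" "inn (W z) (W ?y) = inn (W z) (W z)"
      using Minn_C_right[OF y y] Minn_C_right[OF y z] Minn_C_right[OF z y] Minn_C_right[OF z z] pinv z
      by simp_all
    then show "inn (W ?y - W z) (W ?y - W z) $$ (r, c) = 0\<^sub>m m m $$ (r, c)"
      using rc by (simp add: inn_diff_left_index inn_diff_right_index)
  qed simp_all
  then have "W ?y - W z = 0" by (rule inn_self_eq_zero)
  then show ?thesis by simp
qed

end

lemma stinespring_intertwiner:
  assumes A: "stinespring_setting ns ms Phi smul act inn W"
    and B: "stinespring_setting ns ms Phi smul' act' inn' W'"
  obtains R :: "'f::ab_group_add \<Rightarrow> 'e::ab_group_add" and R_adj :: "'e \<Rightarrow> 'f"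
  where "\<And>x. x \<in> Mcar ns ms \<Longrightarrow> R (W' x) = W x"
    and "\<And>a u. inn (R a) u = inn' a (R_adj u)"
    and "\<And>u b. inn' (R_adj u) b = inn u (R b)"
proof -
  interpret A: stinespring_setting ns ms Phi smul act inn W by (rule A)
  interpret B: stinespring_setting ns ms Phi smul' act' inn' W' by (rule B)
  obtain d J where pinv: "\<forall>x\<in>Mcar ns ms. A.C (A.Q d J (A.C x)) = A.C x"
    using A.C_poly_pseudo_inverse by blast
  define R where "R a = W (A.Q d J (B.W_adj a))" for a
  define R_adj where "R_adj u = W' (A.Q (\<lambda>j. cnj (d j)) J (A.W_adj u))" for u
  have "R (W' x) = W x" if x: "x \<in> Mcar ns ms" for x
    unfolding R_def B.C_eq_W_adj_W[OF x, symmetric] by (rule A.W_C_poly_C[OF pinv x])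
  moreover have R_adj: "inn (R a) u = inn' a (R_adj u)" for a u
  proof -
    have Va: "B.W_adj a \<in> Mcar ns ms" and Vu: "A.W_adj u \<in> Mcar ns ms"
      by (rule B.W_adj_Mcar, rule A.W_adj_Mcar)
    have "inn (R a) u = Minn ns ms (A.Q d J (B.W_adj a)) (A.W_adj u)"
      unfolding R_def by (rule A.inn_W_left[OF A.C_poly_Mcar[OF Va]])
    also have "\<dots> = Minn ns ms (B.W_adj a) (A.Q (\<lambda>j. cnj (d j)) J (A.W_adj u))"
      by (rule A.C_poly_adjoint[OF Va Vu])
    also have "\<dots> = adjm (inn' (R_adj u) a)"
      unfolding R_adj_def B.inn_W_left[OF A.C_poly_Mcar[OF Vu]]
      by (rule Minn_adjm[symmetric, OF A.C_poly_Mcar[OF Vu] Va])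
    also have "\<dots> = inn' a (R_adj u)" by (rule B.inn_swap[symmetric])
    finally show ?thesis .
  qed
  moreover have "inn' (R_adj u) b = inn u (R b)" for u b
    using R_adj[of b u] A.inn_swap[of u "R b"] B.inn_swap[of b "R_adj u"] adjm_adjm[OF B.inn_carrier]
    by simp
  ultimately show ?thesis using that by blast
qed

lemma compress_subset:
  assumes A: "stinespring_setting ns ms Phi smul act inn W"
    and B: "stinespring_setting ns ms Phi smul' act' inn' W'"
  shows "compress ns ms inn W \<subseteq> compress ns ms inn' W'"
proof
  interpret A: stinespring_setting ns ms Phi smul act inn W by (rule A)
  interpret B: stinespring_setting ns ms Phi smul' act' inn' W' by (rule B)
  obtain R R_adj where RW: "\<And>x. x \<in> Mcar ns ms \<Longrightarrow> R (W' x) = W x"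
    and R_adj: "\<And>a u. inn (R a) u = inn' a (R_adj u)"
    and R_adj': "\<And>u b. inn' (R_adj u) b = inn u (R b)"
    using stinespring_intertwiner[OF A B] by blast
  fix F assume "F \<in> compress ns ms inn W"
  then obtain T where "T \<in> adjointable inn" and F: "F = restrict (\<lambda>x. A.W_adj (T (W x))) (Mcar ns ms)"
    unfolding compress_def by blast
  then obtain S where S: "\<And>x y. inn (T x) y = inn x (S y)" unfolding adjointable_def by blast
  define T' where "T' a = R_adj (T (R a))" for a
  have "T' \<in> adjointable inn'"
    unfolding adjointable_def
  proof (intro CollectI exI allI)
    fix a b
    show "inn' (T' a) b = inn' a (R_adj (S (R b)))"
      unfolding T'_def R_adj' S R_adj ..
  qed
  moreover have "B.W_adj (T' (W' x)) = A.W_adj (T (W x))" if x: "x \<in> Mcar ns ms" for x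
  proof (rule Mcar_eq_if_Minn_eq[OF B.W_adj_Mcar A.W_adj_Mcar])
    fix z assume z: "z \<in> Mcar ns ms"
    have "Minn ns ms z (B.W_adj (T' (W' x))) = inn' (W' z) (R_adj (T (R (W' x))))"
      unfolding T'_def by (rule B.inn_W_left[symmetric, OF z])
    also have "\<dots> = inn (W z) (T (W x))"
      unfolding R_adj[symmetric] RW[OF z] RW[OF x] ..
    also have "\<dots> = Minn ns ms z (A.W_adj (T (W x)))" by (rule A.inn_W_left[OF z])
    finally show "Minn ns ms z (B.W_adj (T' (W' x))) = Minn ns ms z (A.W_adj (T (W x)))" .
  qed
  then have "F = restrict (\<lambda>x. B.W_adj (T' (W' x))) (Mcar ns ms)"
    unfolding F by (intro restrict_ext) simp
  ultimately show "F \<in> compress ns ms inn' W'"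
    unfolding compress_def by blast
qed

lemma compress_subset_Ladj_M:
  assumes A: "stinespring_setting ns ms Phi smul act inn W"
  shows "compress ns ms inn W \<subseteq> Ladj_M ns ms"
proof
  interpret A: stinespring_setting ns ms Phi smul act inn W by (rule A)
  fix F assume "F \<in> compress ns ms inn W"
  then obtain T where "T \<in> adjointable inn" and F: "F = restrict (\<lambda>x. A.W_adj (T (W x))) (Mcar ns ms)"
    unfolding compress_def by blast
  then obtain S where S: "\<And>x y. inn (T x) y = inn x (S y)" unfolding adjointable_def by blast
  have "Minn ns ms (F x) y = Minn ns ms x (A.W_adj (S (W y)))"
    if x: "x \<in> Mcar ns ms" and y: "y \<in> Mcar ns ms" for x y
  proof -
    have "Minn ns ms (F x) y = adjm (Minn ns ms y (A.W_adj (T (W x))))"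
      unfolding F using x Minn_adjm[OF y A.W_adj_Mcar] by simp
    also have "\<dots> = inn (T (W x)) (W y)"
      by (simp add: A.inn_W_left[OF y, symmetric] A.inn_swap[of "T (W x)"])
    also have "\<dots> = Minn ns ms x (A.W_adj (S (W y)))"
      unfolding S by (rule A.inn_W_left[OF x])
    finally show ?thesis .
  qed
  moreover have "F \<in> extensional (Mcar ns ms)" "F ` Mcar ns ms \<subseteq> Mcar ns ms"
    "(\<lambda>y. A.W_adj (S (W y))) ` Mcar ns ms \<subseteq> Mcar ns ms"
    unfolding F using A.W_adj_Mcar by auto
  ultimately show "F \<in> Ladj_M ns ms" unfolding Ladj_M_def by blast
qed

theorem proposition3p12:
  fixes ns ms :: "nat list"
    and Phi :: "complex mat \<Rightarrow> complex mat"
    and smul :: "complex \<Rightarrow> 'e::ab_group_add \<Rightarrow> 'e" and act :: "'e \<Rightarrow> complex mat \<Rightarrow> 'e"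
    and inn :: "'e \<Rightarrow> 'e \<Rightarrow> complex mat" and W :: "(nat \<Rightarrow> complex mat) \<Rightarrow> 'e"
    and smul' :: "complex \<Rightarrow> 'f::ab_group_add \<Rightarrow> 'f" and act' :: "'f \<Rightarrow> complex mat \<Rightarrow> 'f"
    and inn' :: "'f \<Rightarrow> 'f \<Rightarrow> complex mat" and W' :: "(nat \<Rightarrow> complex mat) \<Rightarrow> 'f"
  assumes "quantum_channel ns ms Phi"
    and "stinespring_module ns ms Phi smul act inn W"
    and "stinespring_module ns ms Phi smul' act' inn' W'"
  shows "compress ns ms inn W = compress ns ms inn' W' \<and> compress ns ms inn W \<subseteq> Ladj_M ns ms"
proof -
  have A: "stinespring_setting ns ms Phi smul act inn W"
    using assms(1,2) by unfold_locales
  have B: "stinespring_setting ns ms Phi smul' act' inn' W'"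
    using assms(1,3) by unfold_locales
  show ?thesis
    using compress_subset[OF A B] compress_subset[OF B A] compress_subset_Ladj_M[OF A] by blast
qed

end
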